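(* Let $(\mathbb{K},|\cdot|)$ be an algebraically closed normed field, $f\in\mathbb{K}[z]$ a polynomial of degree $n\ge2$, $\xi\in\mathbb{K}^n$ a root-vector of $f$, $N\ge1$ and $1\le p\le\infty$. Suppose $x^{(0)}\in\mathbb{K}^n$ has pairwise distinct components and \[ E(x^{(0)})=\left\|\frac{x^{(0)}-\xi}{d(x^{(0)})}\right\|_p\le\frac{n(2^{1/n}-1)}{(n-1)^{1/q}+2}. \] Then the $N$th Weierstrass-type iteration $x^{(k+1)}=T^{(N)}(x^{(k)})$ is well-defined and converges to $\xi$ with order of convergence $N+1$, and for all $k\ge0$, \[ \|x^{(k+1)}-\xi\|\preceq\theta\lambda^{(N+1)^k}\|x^{(k)}-\xi\|,\quad \|x^{(k)}-\xi\|\preceq\theta^k\lambda^{((N+1)^k-1)/N}\|x^{(0)}-\xi\|, \] \[ \|x^{(k+1)}-\xi\|\preceq\mu^{N(N+1)^k}\|x^{(k)}-\xi\|,\quad \|x^{(k)}-\xi\|\preceq\mu^{(N+1)^k-1}\|x^{(0)}-\xi\|, \] where $\lambda=\phi_N(E(x^{(0)}))$, $\theta=\psi_N(E(x^{(0)}))$ and $\mu=\phi(E(x^{(0)}))$.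
   Context: $a_0$ is the leading coefficient of $f$. For $1\le p\le\infty$, $\|x\|_p=(\sum_i|x_i|^p)^{1/p}$ (max-norm if $p=\infty$), and $q$ is the conjugate exponent, $1/p+1/q=1$. For $x\in\mathbb{K}^n$, $\|x\|=(|x_1|,\dots,|x_n|)\in\mathbb{R}^n$ and $\preceq$ is the coordinatewise order. $d_i(x)=\min_{j\ne i}|x_i-x_j|$, $d(x)=(d_1(x),\dots,d_n(x))$; for $x\in\mathbb{K}^n$, $y\in\mathbb{R}^n$ with nonzero components, $x/y=(|x_1|/y_1,\dots,|x_n|/y_n)$. A root-vector of $f$ is $\xi\in\mathbb{K}^n$ with $f(z)=a_0\prod_i(z-\xi_i)$ for all $z$. Weierstrass-type maps: $T^{(0)}(x)=x$ on $D_0=\mathbb{K}^n$; $D_{N+1}=\{x\in D_N: x_i\ne T^{(N)}_j(x)\ \forall i\ne j\}$, and for $x\in D_{N+1}$, $T^{(N+1)}_i(x)=x_i-\dfrac{f(x_i)}{a_0\prod_{j\ne i}(x_i-T^{(N)}_j(x))}$. The iteration is well-defined if $x^{(k)}\in D_N$ for all $k$. Real functions: $\omega(t)=\left(1+\frac{t}{(n-1)^{1/p}}\right)^{n-1}$ (with $(n-1)^{1/p}=1$ if $p=\infty$), $\Psi(t)=(1+2t)\omega(t)$, $R$ the unique positive solution of $\Psi(t)=2$, $\phi(t)=\frac{\omega(t)-1}{1-2t\omega(t)}$ on $[0,R]$. On $[0,R]$: $\phi_0\equiv1$, $\omega_N(t)=\left(1+\frac{t\phi_N(t)}{(n-1)^{1/p}}\right)^{n-1}$,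 $\phi_{N+1}(t)=\frac{\omega_N(t)-1}{1-2t\omega_N(t)}$; for $N\ge1$, $\psi_N(t)=1-2t\,\omega_{N-1}(t)$. *)

theory Defs
  imports Complex_Main "HOL-Computational_Algebra.Polynomial" "HOL-Library.Extended_Real"
begin

definition is_absval :: "('a::field \<Rightarrow> real) \<Rightarrow> bool" where
  "is_absval av \<longleftrightarrow> (\<forall>x. 0 \<le> av x) \<and> (\<forall>x. av x = 0 \<longleftrightarrow> x = 0)
     \<and> (\<forall>x y. av (x * y) = av x * av y) \<and> (\<forall>x y. av (x + y) \<le> av x + av y)"

definition alg_closed_field :: "'a::field itself \<Rightarrow> bool" where
  "alg_closed_field _ \<longleftrightarrow> (\<forall>q :: 'a poly. 1 \<le> degree q \<longrightarrow> (\<exists>z. poly q z = 0))"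

text \<open>Vectors of length n are functions on indices 0..n-1. The exponent p ranges over [1,\<infinity>]
  as an extended real; invp p = 1/p (with 1/\<infinity> = 0).\<close>
definition invp :: "ereal \<Rightarrow> real" where
  "invp p = (if p = \<infinity> then 0 else 1 / real_of_ereal p)"

definition pnorm :: "nat \<Rightarrow> ereal \<Rightarrow> (nat \<Rightarrow> real) \<Rightarrow> real" where
  "pnorm n p v = (if p = \<infinity> then Max ((\<lambda>i. \<bar>v i\<bar>) ` {..<n})
                 else (\<Sum>i<n. \<bar>v i\<bar> powr real_of_ereal p) powr (1 / real_of_ereal p))"

definition dist_i :: "('a::field \<Rightarrow> real) \<Rightarrow> nat \<Rightarrow> (nat \<Rightarrow> 'a) \<Rightarrow> nat \<Rightarrow> real" where
  "dist_i av n x i = Min ((\<lambda>j. av (x i - x j)) ` ({..<n} - {i}))"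

definition Efun :: "('a::field \<Rightarrow> real) \<Rightarrow> nat \<Rightarrow> ereal \<Rightarrow> (nat \<Rightarrow> 'a) \<Rightarrow> (nat \<Rightarrow> 'a) \<Rightarrow> real" where
  "Efun av n p \<xi> x = pnorm n p (\<lambda>i. av (x i - \<xi> i) / dist_i av n x i)"

definition is_root_vector :: "'a::field poly \<Rightarrow> (nat \<Rightarrow> 'a) \<Rightarrow> bool" where
  "is_root_vector f \<xi> \<longleftrightarrow> (\<forall>z. poly f z = lead_coeff f * (\<Prod>i<degree f. (z - \<xi> i)))"

fun WT :: "'a::field poly \<Rightarrow> nat \<Rightarrow> (nat \<Rightarrow> 'a) \<Rightarrow> (nat \<Rightarrow> 'a)" where
  "WT f 0 x = x"
| "WT f (Suc N) x = (\<lambda>i. x i - poly f (x i) /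
        (lead_coeff f * (\<Prod>j\<in>{..<degree f} - {i}. (x i - WT f N x j))))"

fun WD :: "'a::field poly \<Rightarrow> nat \<Rightarrow> (nat \<Rightarrow> 'a) \<Rightarrow> bool" where
  "WD f 0 x = True"
| "WD f (Suc N) x = (WD f N x \<and>
        (\<forall>i<degree f. \<forall>j<degree f. i \<noteq> j \<longrightarrow> x i \<noteq> WT f N x j))"

definition omega :: "nat \<Rightarrow> ereal \<Rightarrow> real \<Rightarrow> real" where
  "omega n p t = (1 + t / (real n - 1) powr invp p) ^ (n - 1)"

definition phi :: "nat \<Rightarrow> ereal \<Rightarrow> real \<Rightarrow> real" where
  "phi n p t = (omega n p t - 1) / (1 - 2 * t * omega n p t)"

fun phiN :: "nat \<Rightarrow> ereal \<Rightarrow> nat \<Rightarrow> real \<Rightarrow> real"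
and omegaN :: "nat \<Rightarrow> ereal \<Rightarrow> nat \<Rightarrow> real \<Rightarrow> real" where
  "phiN n p 0 t = 1"
| "phiN n p (Suc N) t = (omegaN n p N t - 1) / (1 - 2 * t * omegaN n p N t)"
| "omegaN n p N t = (1 + t * phiN n p N t / (real n - 1) powr invp p) ^ (n - 1)"

definition psiN :: "nat \<Rightarrow> ereal \<Rightarrow> nat \<Rightarrow> real \<Rightarrow> real" where
  "psiN n p N t = 1 - 2 * t * omegaN n p (N - 1) t"

end

theory Submission
  imports Defs "HOL-Analysis.Analysis"
begin

text \<open>Factoring \<open>f\<close> through its root vector, the \<open>i\<close>-th error of \<open>T\<^sup>(\<^sup>m\<^sup>+\<^sup>1\<^sup>) x\<close> is
  \<open>(x\<^sub>i - \<xi>\<^sub>i) (1 - \<Prod>\<^sub>j\<^sub>\<noteq>\<^sub>i (1 + b\<^sub>j))\<close> with \<open>b\<^sub>j = (y\<^sub>j - \<xi>\<^sub>j) / (x\<^sub>i - y\<^sub>j)\<close> and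
  \<open>y = T\<^sup>(\<^sup>m\<^sup>) x\<close>. Bounding the product by the AM-GM and power-mean inequalities gives, by
  induction on \<open>m\<close>, the componentwise estimate \<open>|T\<^sup>(\<^sup>N\<^sup>) x - \<xi>| \<le> (\<omega>\<^sub>N\<^sub>-\<^sub>1(E) - 1) |x - \<xi>|\<close>,
  while the mutual distances of the components shrink at most by the factor
  \<open>\<psi>\<^sub>N(E) = 1 - 2 E \<omega>\<^sub>N\<^sub>-\<^sub>1(E)\<close>. Hence \<open>E(T\<^sup>(\<^sup>N\<^sup>) x) \<le> \<phi>\<^sub>N(E) E\<close>, and as
  \<open>\<phi>\<^sub>N(s t) \<le> s\<^sup>N \<phi>\<^sub>N(t)\<close> for \<open>s \<le> 1\<close>, the quantities \<open>E(x\<^sup>(\<^sup>k\<^sup>))\<close> decay doubly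
  exponentially, which yields all error estimates. The bound on \<open>E(x\<^sup>(\<^sup>0\<^sup>))\<close> is, by the strict
  weighted AM-GM inequality, exactly what makes \<open>\<Psi>(E) < 2\<close>. For the order of convergence, the
  distances \<open>d\<^sub>i(x\<^sup>(\<^sup>k\<^sup>))\<close> stay above a convergent product, so \<open>E(x\<^sup>(\<^sup>k\<^sup>))\<close> is
  bounded by a multiple of \<open>\<parallel>x\<^sup>(\<^sup>k\<^sup>) - \<xi>\<parallel>\<^sub>p\<close>.\<close>

section \<open>Absolute values\<close>

locale absolute_value =
  fixes av :: "'a::field \<Rightarrow> real"
  assumes is_absval: "is_absval av"
begin

lemma nonneg [simp]: "0 \<le> av x"
  using is_absval by (simp add: is_absval_def)

lemma eq_0_iff [simp]: "av x = 0 \<longleftrightarrow> x = 0"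
  using is_absval by (simp add: is_absval_def)

lemma zero [simp]: "av 0 = 0"
  by simp

lemma pos_iff [simp]: "0 < av x \<longleftrightarrow> x \<noteq> 0"
  using nonneg[of x] eq_0_iff[of x] by linarith

lemma mult: "av (x * y) = av x * av y"
  using is_absval by (simp add: is_absval_def)

lemma triangle: "av (x + y) \<le> av x + av y"
  using is_absval by (simp add: is_absval_def)

lemma one [simp]: "av 1 = 1"
proof -
  have "av 1 * av 1 = av 1 * 1"
    using mult[of 1 1] by simp
  then show ?thesis
    by (subst (asm) mult_left_cancel) auto
qed

lemma minus [simp]: "av (- x) = av x"
proof -
  have "av (-1) ^ 2 = 1"
    using mult[of "-1" "-1"] by (simp add: power2_eq_square)
  then have "av (-1) = 1"
    using nonneg[of "-1"] by (auto simp: power2_eq_1_iff)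
  then show ?thesis
    using mult[of "-1" x] by simp
qed

lemma diff_commute: "av (x - y) = av (y - x)"
  by (metis minus minus_diff_eq)

lemma triangle_diff: "av (x - z) \<le> av (x - y) + av (y - z)"
  using triangle[of "x - y" "y - z"] by simp

lemma inverse: "av (inverse x) = inverse (av x)"
proof (cases "x = 0")
  case False
  then have "av x * av (inverse x) = 1"
    using mult[of x "inverse x"] by simp
  then show ?thesis
    using inverse_unique by metis
qed simp

lemma divide: "av (x / y) = av x / av y"
  by (simp add: divide_inverse mult inverse)

lemma prod: "finite S \<Longrightarrow> av (\<Prod>j\<in>S. g j) = (\<Prod>j\<in>S. av (g j))"
  by (induction S rule: finite_induct) (auto simp: mult)

lemma prod_one_plus_le: "finite S \<Longrightarrow> av (\<Prod>j\<in>S. 1 + b j) \<le> (\<Prod>j\<in>S. 1 + av (b j))"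
  unfolding prod by (intro prod_mono) (use triangle[of 1] in auto)

lemma one_minus_prod_one_plus_le:
  assumes "finite S"
  shows "av (1 - (\<Prod>j\<in>S. 1 + b j)) \<le> (\<Prod>j\<in>S. 1 + av (b j)) - 1"
  using assms
proof (induction S rule: finite_induct)
  case (insert k S)
  let ?P = "\<Prod>j\<in>S. 1 + b j" and ?Q = "\<Prod>j\<in>S. 1 + av (b j)"
  have "av (1 - (1 + b k) * ?P) = av ((1 - ?P) - b k * ?P)"
    by (simp add: algebra_simps)
  also have "\<dots> \<le> av (1 - ?P) + av (b k) * av ?P"
    using triangle[of "1 - ?P" "- (b k * ?P)"] by (simp add: mult)
  also have "\<dots> \<le> (?Q - 1) + av (b k) * ?Q"
    using insert.IH prod_one_plus_le[OF insert.hyps(1)] by (intro add_mono mult_left_mono) auto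
  finally show ?case
    using insert.hyps by (simp add: algebra_simps)
qed simp

end

section \<open>\<open>p\<close>-norms\<close>

lemma pnorm_nonneg:
  assumes "1 \<le> n" shows "0 \<le> pnorm n p v"
proof -
  have "\<bar>v 0\<bar> \<le> Max ((\<lambda>i. \<bar>v i\<bar>) ` {..<n})"
    using assms by (intro Max_ge) auto
  then show ?thesis
    by (auto simp: pnorm_def)
qed

lemma real_of_ereal_ge_1: "1 \<le> p \<Longrightarrow> p \<noteq> \<infinity> \<Longrightarrow> 1 \<le> real_of_ereal p"
  by (cases p) auto

lemma abs_le_pnorm:
  assumes p: "1 \<le> p" and i: "i < n"
  shows "\<bar>v i\<bar> \<le> pnorm n p v"
proof (cases "p = \<infinity>")
  case True
  then show ?thesis
    using i by (simp add: pnorm_def)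
next
  case False
  define r where "r = real_of_ereal p"
  have r: "1 \<le> r"
    using real_of_ereal_ge_1[OF p False] by (simp add: r_def)
  have "\<bar>v i\<bar> = (\<bar>v i\<bar> powr r) powr (1 / r)"
    using r by (simp add: powr_powr)
  also have "\<dots> \<le> (\<Sum>j<n. \<bar>v j\<bar> powr r) powr (1 / r)"
    using r i by (intro powr_mono2 member_le_sum) auto
  finally show ?thesis
    using False by (simp add: pnorm_def r_def)
qed

lemma pnorm_le_mult:
  assumes p: "1 \<le> p" and n: "1 \<le> n" and c: "0 \<le> c"
    and le: "\<And>i. i < n \<Longrightarrow> \<bar>v i\<bar> \<le> c * \<bar>w i\<bar>"
  shows "pnorm n p v \<le> c * pnorm n p w"
proof (cases "p = \<infinity>")
  case True
  have "\<bar>v i\<bar> \<le> c * Max ((\<lambda>i. \<bar>w i\<bar>) ` {..<n})" if "i < n" for i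
  proof -
    have "\<bar>w i\<bar> \<le> Max ((\<lambda>i. \<bar>w i\<bar>) ` {..<n})"
      using that by (intro Max_ge) auto
    then show ?thesis
      using le[OF that] c by (meson mult_left_mono order_trans)
  qed
  then show ?thesis
    using True n unfolding pnorm_def by (auto intro!: Max.boundedI simp: lessThan_empty_iff)
next
  case False
  define r where "r = real_of_ereal p"
  have r: "1 \<le> r"
    using real_of_ereal_ge_1[OF p False] by (simp add: r_def)
  have "(\<Sum>i<n. \<bar>v i\<bar> powr r) \<le> (\<Sum>i<n. (c * \<bar>w i\<bar>) powr r)"
    using r le by (intro sum_mono powr_mono2) auto
  also have "\<dots> = c powr r * (\<Sum>i<n. \<bar>w i\<bar> powr r)"
    using c by (simp add: powr_mult sum_distrib_left)
  finally have "(\<Sum>i<n. \<bar>v i\<bar> powr r) powr (1/r) \<le> (c powr r * (\<Sum>i<n. \<bar>w i\<bar> powr r)) powr (1/r)"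
    using r by (intro powr_mono2) (auto intro: sum_nonneg)
  also have "\<dots> = c * (\<Sum>i<n. \<bar>w i\<bar> powr r) powr (1/r)"
    using c r by (simp add: powr_mult sum_nonneg powr_powr)
  finally show ?thesis
    using False by (simp add: pnorm_def r_def)
qed

lemma convex_on_powr_nonneg:
  assumes r: "1 \<le> (r::real)"
  shows "convex_on {0..} (\<lambda>x. x powr r)"
proof (rule convex_onI)
  fix t x y :: real
  assume t: "0 < t" "t < 1" and xy: "x \<in> {0..}" "y \<in> {0..}"
  have shrink: "(s * z) powr r \<le> s * z powr r" if "0 \<le> s" "s \<le> 1" "0 \<le> z" for s z :: real
  proof -
    have "s powr r \<le> s"
    proof (cases "s = 0")
      case False
      then have "s powr r \<le> s powr 1"
        using that r by (intro powr_mono') auto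
      then show ?thesis
        using that by simp
    qed simp
    then show ?thesis
      using that by (simp add: powr_mult mult_right_mono)
  qed
  show "((1 - t) *\<^sub>R x + t *\<^sub>R y) powr r \<le> (1 - t) * x powr r + t * y powr r"
  proof (cases "x = 0 \<or> y = 0")
    case True
    then show ?thesis
      using shrink[of t y] shrink[of "1 - t" x] t xy by auto
  next
    case False
    then show ?thesis
      using convex_onD[OF powr_convex[OF r], of t x y] t xy by auto
  qed
qed (simp add: convex_real_interval)

lemma power_mean_le:
  fixes v :: "'a \<Rightarrow> real"
  assumes S: "finite S" "S \<noteq> {}" and r: "1 \<le> r" and v: "\<And>j. j \<in> S \<Longrightarrow> 0 \<le> v j"
  shows "(\<Sum>j\<in>S. v j) / card S \<le> ((\<Sum>j\<in>S. v j powr r) / card S) powr (1 / r)"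
proof -
  define m where "m = (\<Sum>j\<in>S. (1 / real (card S)) *\<^sub>R v j)"
  have m: "m = (\<Sum>j\<in>S. v j) / card S"
    by (simp add: m_def sum_divide_distrib)
  have m0: "0 \<le> m"
    using v by (simp add: m_def sum_nonneg)
  have "m powr r \<le> (\<Sum>j\<in>S. (1 / real (card S)) * v j powr r)"
    unfolding m_def using S v by (intro convex_on_sum[OF S convex_on_powr_nonneg[OF r]]) auto
  also have "\<dots> = (\<Sum>j\<in>S. v j powr r) / card S"
    by (simp add: sum_divide_distrib)
  finally have "(m powr r) powr (1 / r) \<le> ((\<Sum>j\<in>S. v j powr r) / card S) powr (1 / r)"
    using m0 r by (intro powr_mono2) auto
  moreover have "0 \<le> (\<Sum>j\<in>S. v j)"
    using v by (simp add: sum_nonneg)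
  ultimately show ?thesis
    using m0 r by (simp add: powr_powr m)
qed

lemma sum_le_pnorm:
  assumes p: "1 \<le> p" and n: "2 \<le> n" and i: "i < n" and v: "\<And>j. 0 \<le> v j"
  shows "(\<Sum>j\<in>{..<n}-{i}. v j) \<le> (real n - 1) * (pnorm n p v / (real n - 1) powr invp p)"
proof -
  define S where "S = {..<n}-{i}"
  have fS: "finite S" and card_S: "real (card S) = real n - 1"
    using i n by (auto simp: S_def)
  then have S_ne: "S \<noteq> {}"
    using n by auto
  show ?thesis
  proof (cases "p = \<infinity>")
    case True
    have "(\<Sum>j\<in>S. v j) \<le> (\<Sum>j\<in>S. pnorm n p v)"
      using abs_le_pnorm[OF p, of _ n v] v by (intro sum_mono) (auto simp: S_def)
    then show ?thesis
      using True card_S n by (simp add: invp_def S_def)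
  next
    case False
    define r where "r = real_of_ereal p"
    have r: "1 \<le> r"
      using real_of_ereal_ge_1[OF p False] by (simp add: r_def)
    have "(\<Sum>j\<in>S. v j) / card S \<le> ((\<Sum>j\<in>S. v j powr r) / card S) powr (1 / r)"
      using power_mean_le[OF fS S_ne r] v by blast
    also have "\<dots> \<le> ((\<Sum>j<n. v j powr r) / card S) powr (1 / r)"
      using v r by (intro powr_mono2 divide_right_mono sum_mono2) (auto simp: S_def sum_nonneg)
    also have "\<dots> = pnorm n p v / (real n - 1) powr invp p"
      using False card_S v by (simp add: powr_divide pnorm_def invp_def r_def sum_nonneg)
    finally show ?thesis
      using card_S n by (simp add: S_def pos_divide_le_eq mult.commute)
  qed
qed

lemma prod_one_plus_le_pnorm:
  assumes p: "1 \<le> p" and n: "2 \<le> n" and i: "i < n" and c: "0 \<le> c" and v: "\<And>j. 0 \<le> v j"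
  shows "(\<Prod>j\<in>{..<n}-{i}. 1 + c * v j) \<le> (1 + c * pnorm n p v / (real n - 1) powr invp p) ^ (n - 1)"
proof -
  define S where "S = {..<n}-{i}"
  define G where "G = (\<Prod>j\<in>S. 1 + c * v j)"
  define B where "B = pnorm n p v / (real n - 1) powr invp p"
  have fS: "finite S" and card_S: "card S = n - 1" and card_S': "real (card S) = real n - 1"
    using i n by (auto simp: S_def)
  then have S_ne: "S \<noteq> {}"
    using n by auto
  have G1: "1 \<le> G"
    unfolding G_def using c v by (intro prod_ge_1) auto
  have "G powr (1 / card S) \<le> (\<Sum>j\<in>S. (1 + c * v j) / card S)"
    unfolding G_def using c v by (intro arith_geom_mean[OF fS S_ne]) auto
  also have "\<dots> = 1 + c * ((\<Sum>j\<in>S. v j) / card S)"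
    using card_S' n by (simp add: sum_divide_distrib[symmetric] sum.distrib sum_distrib_left field_simps)
  also have "\<dots> \<le> 1 + c * B"
  proof -
    have "(\<Sum>j\<in>S. v j) \<le> real (card S) * B"
      unfolding S_def B_def using sum_le_pnorm[OF p n i v] card_S' by (simp add: S_def)
    then have "(\<Sum>j\<in>S. v j) / card S \<le> B"
      using card_S' n by (simp add: divide_le_eq mult.commute)
    then show ?thesis
      using c by (intro add_left_mono mult_left_mono)
  qed
  finally have "G powr (1 / card S) \<le> 1 + c * B" .
  have "G = (G powr (1 / card S)) powr (card S)"
    using G1 S_ne fS by (simp add: powr_powr)
  also have "\<dots> = (G powr (1 / card S)) ^ (card S)"
    using G1 by (simp add: powr_realpow)
  also have "\<dots> \<le> (1 + c * B) ^ (card S)"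
    using \<open>G powr (1 / card S) \<le> 1 + c * B\<close> by (intro power_mono) auto
  finally show ?thesis
    using card_S by (simp add: G_def S_def B_def)
qed

section \<open>Elementary real inequalities\<close>

lemma power_one_plus_mult_sub_one_le:
  fixes s x :: real
  assumes s: "0 \<le> s" "s \<le> 1" and x: "0 \<le> x"
  shows "(1 + s * x) ^ K - 1 \<le> s * ((1 + x) ^ K - 1)"
proof (induction K)
  case (Suc K)
  have "(1 + s * x) ^ K \<le> (1 + x) ^ K"
    using s x by (intro power_mono) (auto simp: mult_left_le_one_le)
  then have "(1 + s * x) ^ K - 1 + s * x * (1 + s * x) ^ K \<le> s * ((1 + x) ^ K - 1) + s * x * (1 + x) ^ K"
    using Suc s x by (intro add_mono mult_left_mono) auto
  then show ?case
    by (simp add: algebra_simps)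
qed simp

lemma bernoulli_strict:
  fixes h :: real
  assumes "-1 < h" "h \<noteq> 0" "2 \<le> m"
  shows "1 + real m * h < (1 + h) ^ m"
  using assms(3)
proof (induction m rule: dec_induct)
  case base
  have "0 < h * h"
    using assms(2) by (cases "0 < h") (auto intro: mult_neg_neg)
  then show ?case
    by (simp add: power2_eq_square algebra_simps)
next
  case (step m)
  have "0 \<le> real m * (h * h)"
    by simp
  then have "1 + real (Suc m) * h \<le> (1 + h) * (1 + real m * h)"
    by (simp add: algebra_simps)
  also have "\<dots> < (1 + h) * (1 + h) ^ m"
    using step assms by (intro mult_strict_left_mono) auto
  finally show ?case
    by simp
qed

lemma weighted_arith_geom_mean_strict:
  fixes x y :: real
  assumes x: "0 < x" and y: "0 < y" and K: "1 \<le> K" and xy: "x \<noteq> y"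
  shows "x * y ^ K < ((x + real K * y) / (real K + 1)) ^ (K + 1)"
proof -
  define h where "h = (x - y) / ((real K + 1) * y)"
  have hy: "(real K + 1) * h * y = x - y"
    unfolding h_def using y by simp
  have "0 \<le> y * real K"
    using y by simp
  then have "-1 * ((real K + 1) * y) < x - y"
    using x by (simp add: algebra_simps)
  then have h1: "-1 < h"
    unfolding h_def using y by (simp add: less_divide_eq)
  have h0: "h \<noteq> 0"
    using xy y by (simp add: h_def)
  have "(real K + 1) * (y * (1 + h)) = x + real K * y"
    using hy by (simp add: algebra_simps)
  then have mean: "(x + real K * y) / (real K + 1) = y * (1 + h)"
    by (simp add: divide_eq_eq mult.commute add_pos_nonneg)
  have "x * y ^ K = y ^ K * (y + (real K + 1) * h * y)"
    unfolding hy by simp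
  also have "\<dots> = y ^ (K + 1) * (1 + real (K + 1) * h)"
    by (simp add: algebra_simps)
  also have "\<dots> < y ^ (K + 1) * (1 + h) ^ (K + 1)"
    using bernoulli_strict[OF h1 h0, of "K + 1"] K y by (intro mult_strict_left_mono) auto
  also have "\<dots> = ((x + real K * y) / (real K + 1)) ^ (K + 1)"
    unfolding mean by (simp add: power_mult_distrib)
  finally show ?thesis .
qed

lemma exp_le_one_minus:
  fixes z c :: real
  assumes "0 \<le> z" "z \<le> c" "c < 1"
  shows "exp (- z / (1 - c)) \<le> 1 - z"
proof -
  have z1: "z < 1"
    using assms by simp
  have "1 / (1 - z) \<le> exp (z / (1 - z))"
    using exp_ge_add_one_self[of "z / (1 - z)"] z1 by (simp add: field_simps)
  then have "exp (- (z / (1 - z))) \<le> 1 - z"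
    using z1 by (simp add: exp_minus field_simps)
  moreover have "z / (1 - z) \<le> z / (1 - c)"
    using assms z1 by (intro divide_left_mono) auto
  ultimately show ?thesis
    by (smt (verit) exp_le_cancel_iff minus_divide_left)
qed

lemma prod_one_minus_geometric_lower_bound:
  fixes c lam :: real
  assumes c: "0 \<le> c" "c < 1" and lam: "0 \<le> lam" "lam < 1"
  shows "exp (- (c / (1 - c)) / (1 - lam)) \<le> (\<Prod>l<k. 1 - c * lam ^ l)"
proof -
  have "(\<Sum>l<k. lam ^ l) = (1 - lam ^ k) / (1 - lam)"
    using lam by (simp add: sum_gp_strict)
  also have "\<dots> \<le> 1 / (1 - lam)"
    using lam by (intro divide_right_mono) auto
  finally have "(c / (1 - c)) * (\<Sum>l<k. lam ^ l) \<le> (c / (1 - c)) * (1 / (1 - lam))"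
    using c by (intro mult_left_mono) auto
  then have "- (c / (1 - c)) / (1 - lam) \<le> - (c / (1 - c)) * (\<Sum>l<k. lam ^ l)"
    by simp
  then have "exp (- (c / (1 - c)) / (1 - lam)) \<le> exp (\<Sum>l<k. - (c * lam ^ l) / (1 - c))"
    by (simp add: sum_distrib_left sum_negf)
  also have "\<dots> = (\<Prod>l<k. exp (- (c * lam ^ l) / (1 - c)))"
    by (simp add: exp_sum)
  also have "\<dots> \<le> (\<Prod>l<k. 1 - c * lam ^ l)"
  proof (intro prod_mono conjI)
    fix l
    have "c * lam ^ l \<le> c"
      using c lam by (simp add: mult_left_le power_le_one)
    then show "exp (- (c * lam ^ l) / (1 - c)) \<le> 1 - c * lam ^ l"
      using c lam by (intro exp_le_one_minus) auto
  qed simp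
  finally show ?thesis .
qed

lemma geometric_exponent:
  fixes N :: nat
  assumes N: "1 \<le> N"
  defines "e k \<equiv> ((N + 1) ^ k - 1) div N"
  shows "(N + 1) ^ k = N * e k + 1" and "e (Suc k) = e k + (N + 1) ^ k" and "k \<le> e k"
proof -
  define g where "g k = (\<Sum>l<k. (N + 1) ^ l)" for k
  have g: "(N + 1) ^ k = N * g k + 1" for k
    by (induction k) (auto simp: g_def algebra_simps)
  have e_g: "e k = g k" for k
  proof -
    have "(N + 1) ^ k - 1 = N * g k"
      using g[of k] by linarith
    then show ?thesis
      using N by (simp add: e_def)
  qed
  show "(N + 1) ^ k = N * e k + 1"
    by (simp only: e_g g)
  show "e (Suc k) = e k + (N + 1) ^ k"
    by (simp add: e_g g_def)
  have "k \<le> g k"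
  proof (induction k)
    case (Suc k)
    have "0 < (N + 1) ^ k"
      by simp
    then show ?case
      using Suc unfolding g_def by (simp only: sum.lessThan_Suc)
  qed simp
  then show "k \<le> e k"
    by (simp add: e_g)
qed

section \<open>The functions \<open>\<omega>\<^sub>N\<close> and \<open>\<phi>\<^sub>N\<close>\<close>

declare phiN.simps(2) [simp del] omegaN.simps [simp del]

locale iteration_functions =
  fixes n :: nat and p :: ereal
  assumes n_ge_2: "2 \<le> n" and p_ge_1: "1 \<le> p"
begin

definition scale :: real where
  "scale = (real n - 1) powr invp p"

text \<open>\<open>admissible t\<close> says \<open>t \<in> [0, R)\<close>, i.e. \<open>\<Psi>(t) < 2\<close>.\<close>

definition admissible :: "real \<Rightarrow> bool" where
  "admissible t \<longleftrightarrow> 0 \<le> t \<and> (1 + 2 * t) * omega n p t < 2"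

lemma scale_ge_1: "1 \<le> scale"
proof -
  have "0 \<le> invp p"
    using p_ge_1 by (cases p) (auto simp: invp_def)
  then show ?thesis
    unfolding scale_def using n_ge_2 by (intro ge_one_powr_ge_zero) auto
qed

lemma omega_eq: "omega n p t = (1 + t / scale) ^ (n - 1)"
  by (simp add: scale_def omega_def)

lemma omegaN_eq: "omegaN n p m t = (1 + t * phiN n p m t / scale) ^ (n - 1)"
  by (simp add: scale_def omegaN.simps)

lemma omegaN_0: "omegaN n p 0 t = omega n p t"
  by (simp add: omega_def omegaN.simps)

lemma phiN_Suc: "phiN n p (Suc m) t = (omegaN n p m t - 1) / (1 - 2 * t * omegaN n p m t)"
  by (simp add: phiN.simps)

lemma admissible_bounds:
  assumes "admissible t"
  shows "0 \<le> t" "1 \<le> omega n p t" "2 * t * omega n p t < 1" "0 \<le> phi n p t" "phi n p t < 1"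
proof -
  show t: "0 \<le> t"
    using assms by (simp add: admissible_def)
  show omega: "1 \<le> omega n p t"
    unfolding omega_eq using t scale_ge_1 by simp
  have Psi: "(1 + 2 * t) * omega n p t < 2"
    using assms by (simp add: admissible_def)
  then show "2 * t * omega n p t < 1"
    using omega by (simp add: algebra_simps)
  then show "0 \<le> phi n p t" and "phi n p t < 1"
    using omega Psi by (simp_all add: phi_def algebra_simps divide_less_eq)
qed

lemma admissible_mono:
  assumes "admissible E" "0 \<le> t" "t \<le> E"
  shows "admissible t"
proof -
  have "omega n p t \<le> omega n p E" and "0 \<le> omega n p t"
    unfolding omega_eq using assms scale_ge_1 by (auto intro!: power_mono divide_right_mono)
  then have "(1 + 2 * t) * omega n p t \<le> (1 + 2 * E) * omega n p E"
    using assms by (intro mult_mono) auto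
  then show ?thesis
    using assms by (simp add: admissible_def)
qed

lemma omegaN_sub_one_le_scaled:
  assumes s: "0 \<le> s" "s \<le> 1"
    and t: "0 \<le> t * phiN n p m t" and E: "0 \<le> E * phiN n p m' E"
    and le: "t * phiN n p m t \<le> s * (E * phiN n p m' E)"
  shows "omegaN n p m t - 1 \<le> s * (omegaN n p m' E - 1)"
proof -
  have "t * phiN n p m t / scale \<le> s * (E * phiN n p m' E / scale)"
    using divide_right_mono[OF le, of scale] scale_ge_1 by simp
  then have "omegaN n p m t \<le> (1 + s * (E * phiN n p m' E / scale)) ^ (n - 1)"
    unfolding omegaN_eq using t scale_ge_1 by (intro power_mono) auto
  moreover have "(1 + s * (E * phiN n p m' E / scale)) ^ (n - 1) - 1 \<le> s * (omegaN n p m' E - 1)"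
    unfolding omegaN_eq[of m' E] using s E scale_ge_1 by (intro power_one_plus_mult_sub_one_le) auto
  ultimately show ?thesis
    by simp
qed

lemma phiN_omegaN_bounds:
  assumes "admissible t"
  shows "0 \<le> phiN n p m t \<and> phiN n p m t \<le> phi n p t ^ m
    \<and> 1 \<le> omegaN n p m t \<and> omegaN n p m t \<le> omega n p t
    \<and> omegaN n p m t - 1 \<le> phiN n p m t * (omega n p t - 1)
    \<and> 0 < 1 - 2 * t * omegaN n p m t"
proof (induction m)
  case 0
  then show ?case
    using admissible_bounds[OF assms] by (simp add: omegaN_0)
next
  case (Suc m)
  note t = admissible_bounds[OF assms]
  let ?w = "omegaN n p m t" and ?f = "phiN n p m t" and ?f' = "phiN n p (Suc m) t"
  have f'_nonneg: "0 \<le> ?f'"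
    using Suc by (simp add: phiN_Suc)
  have "1 - 2 * t * omega n p t \<le> 1 - 2 * t * ?w"
    using Suc t by (simp add: mult_left_mono)
  then have "?f' \<le> (?f * (omega n p t - 1)) / (1 - 2 * t * omega n p t)"
    using Suc t unfolding phiN_Suc by (intro frac_le) auto
  also have "\<dots> = ?f * phi n p t"
    by (simp add: phi_def)
  also have "\<dots> \<le> phi n p t ^ m * phi n p t"
    using Suc t by (intro mult_right_mono) auto
  finally have f'_le: "?f' \<le> phi n p t ^ Suc m"
    by (simp add: mult.commute)
  then have f'_le_1: "?f' \<le> 1"
    using t by (meson less_imp_le order_trans power_le_one)
  have "omegaN n p (Suc m) t - 1 \<le> ?f' * (omegaN n p 0 t - 1)"
    using f'_nonneg t(1) by (intro omegaN_sub_one_le_scaled[OF f'_nonneg f'_le_1]) (auto simp: mult.commute)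
  then have w': "omegaN n p (Suc m) t - 1 \<le> ?f' * (omega n p t - 1)"
    by (simp add: omegaN_0)
  moreover have "?f' * (omega n p t - 1) \<le> omega n p t - 1"
    using t f'_nonneg f'_le_1 by (intro mult_left_le_one_le) auto
  ultimately have "omegaN n p (Suc m) t \<le> omega n p t"
    by simp
  moreover have "1 \<le> omegaN n p (Suc m) t"
    unfolding omegaN_eq using f'_nonneg t(1) scale_ge_1 by simp
  moreover have "0 < 1 - 2 * t * omegaN n p (Suc m) t"
    using calculation t by (smt (verit) mult_left_mono)
  ultimately show ?case
    using f'_nonneg f'_le w' by blast
qed

lemma phiN_nonneg: "admissible t \<Longrightarrow> 0 \<le> phiN n p m t"
  using phiN_omegaN_bounds by blast

lemma phiN_le_phi_power: "admissible t \<Longrightarrow> phiN n p m t \<le> phi n p t ^ m"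
  using phiN_omegaN_bounds by blast

lemma omegaN_ge_1: "admissible t \<Longrightarrow> 1 \<le> omegaN n p m t"
  using phiN_omegaN_bounds by blast

lemma one_minus_omegaN_pos: "admissible t \<Longrightarrow> 0 < 1 - 2 * t * omegaN n p m t"
  using phiN_omegaN_bounds by blast

lemma phiN_omegaN_scaling:
  assumes E: "admissible E" and s: "0 \<le> s" "s \<le> 1" and t: "0 \<le> t" "t \<le> s * E"
  shows "phiN n p m t \<le> s ^ m * phiN n p m E
    \<and> omegaN n p m t - 1 \<le> s ^ Suc m * (omegaN n p m E - 1)"
proof (induction m)
  case 0
  have "omegaN n p 0 t - 1 \<le> s * (omegaN n p 0 E - 1)"
    using t admissible_bounds(1)[OF E] by (intro omegaN_sub_one_le_scaled[OF s]) auto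
  then show ?case
    by simp
next
  case (Suc m)
  have tE: "t \<le> E"
    using t s admissible_bounds(1)[OF E] by (meson mult_left_le_one_le order_trans)
  then have adm_t: "admissible t"
    using admissible_mono[OF E t(1)] by blast
  let ?wt = "omegaN n p m t" and ?wE = "omegaN n p m E"
  let ?ft = "phiN n p (Suc m) t" and ?fE = "phiN n p (Suc m) E"
  have "s ^ Suc m \<le> 1"
    using s by (intro power_le_one)
  then have "s ^ Suc m * (?wE - 1) \<le> ?wE - 1"
    using s omegaN_ge_1[OF E] by (intro mult_left_le_one_le) auto
  then have "?wt \<le> ?wE"
    using Suc by simp
  then have "t * ?wt \<le> E * ?wE"
    using tE t omegaN_ge_1[OF adm_t, of m] by (intro mult_mono) auto
  then have "1 - 2 * E * ?wE \<le> 1 - 2 * t * ?wt"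
    by simp
  then have ft: "?ft \<le> s ^ Suc m * ?fE"
    using Suc s omegaN_ge_1[OF adm_t, of m] omegaN_ge_1[OF E, of m] one_minus_omegaN_pos[OF E, of m]
    unfolding phiN_Suc
    by (subst times_divide_eq_right, intro frac_le) auto
  have ss: "0 \<le> s ^ Suc (Suc m)" "s ^ Suc (Suc m) \<le> 1"
    using s power_le_one[OF s, of "Suc (Suc m)"] by simp_all
  have "t * ?ft \<le> (s * E) * (s ^ Suc m * ?fE)"
    using t ft phiN_nonneg[OF adm_t] by (intro mult_mono) auto
  then have "t * ?ft \<le> s ^ Suc (Suc m) * (E * ?fE)"
    by (simp add: algebra_simps)
  then have "omegaN n p (Suc m) t - 1 \<le> s ^ Suc (Suc m) * (omegaN n p (Suc m) E - 1)"
    using t(1) admissible_bounds(1)[OF E] phiN_nonneg[OF adm_t] phiN_nonneg[OF E]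
    by (intro omegaN_sub_one_le_scaled[OF ss]) auto
  then show ?case
    using ft by simp
qed

lemma phiN_scaling:
  "admissible E \<Longrightarrow> 0 \<le> s \<Longrightarrow> s \<le> 1 \<Longrightarrow> 0 \<le> t \<Longrightarrow> t \<le> s * E \<Longrightarrow>
    phiN n p m t \<le> s ^ m * phiN n p m E"
  using phiN_omegaN_scaling by blast

lemma omegaN_scaling:
  "admissible E \<Longrightarrow> 0 \<le> s \<Longrightarrow> s \<le> 1 \<Longrightarrow> 0 \<le> t \<Longrightarrow> t \<le> s * E \<Longrightarrow>
    omegaN n p m t - 1 \<le> s ^ Suc m * (omegaN n p m E - 1)"
  using phiN_omegaN_scaling by blast

lemma omegaN_mono:
  assumes "admissible E" "0 \<le> t" "t \<le> E"
  shows "omegaN n p m t \<le> omegaN n p m E"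
  using omegaN_scaling[OF assms(1), of 1 t m] assms by simp

text \<open>With \<open>E = 0\<close> both sides vanish, as \<open>t / 0 = 0\<close>.\<close>
lemma omegaN_sub_one_le_power:
  assumes E: "admissible E" and t: "0 \<le> t" "t \<le> E"
  shows "omegaN n p m t - 1 \<le> (t / E) ^ Suc m * (omegaN n p m E - 1)"
proof (cases "E = 0")
  case True
  then show ?thesis
    using omegaN_scaling[OF E, of 0 t m] t by simp
next
  case False
  then show ?thesis
    using omegaN_scaling[OF E, of "t / E" t m] t admissible_bounds(1)[OF E] by simp
qed

lemma initial_bound_mean_le:
  assumes init: "E \<le> real n * (2 powr (1 / real n) - 1) / ((real n - 1) powr (1 - invp p) + 2)"
  shows "1 + E * ((real n - 1) / scale + 2) / real n \<le> 2 powr (1 / real n)"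
proof -
  define B where "B = (real n - 1) / scale + 2"
  have "0 \<le> (real n - 1) / scale"
    using scale_ge_1 n_ge_2 by simp
  then have B_pos: "0 < B"
    by (simp add: B_def)
  have "(real n - 1) powr (1 - invp p) = (real n - 1) / scale"
    unfolding scale_def powr_diff using n_ge_2 by simp
  then have "E * B \<le> real n * (2 powr (1 / real n) - 1)"
    using init B_pos by (simp add: B_def pos_le_divide_eq add.commute)
  then have "E * B / real n \<le> 2 powr (1 / real n) - 1"
    using n_ge_2 by (simp add: divide_le_eq mult.commute)
  then show ?thesis
    by (simp add: B_def)
qed

lemma admissible_initial:
  assumes E0: "0 \<le> E"
    and init: "E \<le> real n * (2 powr (1 / real n) - 1) / ((real n - 1) powr (1 - invp p) + 2)"
  shows "admissible E"
proof (cases "E = 0")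
  case True
  then show ?thesis
    by (simp add: admissible_def omega_eq)
next
  case False
  define K where "K = n - 1"
  have K: "1 \<le> K" "real K = real n - 1" "K + 1 = n"
    using n_ge_2 by (auto simp: K_def)
  define x where "x = 1 + 2 * E"
  define y where "y = 1 + E / scale"
  have "E / scale \<le> E"
    using scale_ge_1 E0 by (simp add: divide_le_eq mult_le_cancel_left1 mult.commute)
  then have "x \<noteq> y"
    using False E0 by (simp add: x_def y_def)
  \<comment> \<open>strict weighted AM-GM turns \<open>\<Psi>(E) = x y\<^sup>K\<close> into a power of the mean of \<open>x, y, \<dots>, y\<close>\<close>
  then have "x * y ^ K < ((x + real K * y) / (real K + 1)) ^ (K + 1)"
    using K E0 scale_ge_1 by (intro weighted_arith_geom_mean_strict) (auto simp: x_def y_def add_pos_nonneg)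
  also have "(x + real K * y) / (real K + 1) = 1 + E * ((real n - 1) / scale + 2) / real n"
  proof -
    have "0 \<le> real K * scale"
      using scale_ge_1 by simp
    then have "real n = real K + 1" "scale \<noteq> 0" "scale + real K * scale \<noteq> 0"
      using K scale_ge_1 by linarith+
    then show ?thesis
      by (simp add: x_def y_def field_simps)
  qed
  also have "(1 + E * ((real n - 1) / scale + 2) / real n) ^ (K + 1) \<le> (2 powr (1 / real n)) ^ (K + 1)"
    using initial_bound_mean_le[OF init] E0 scale_ge_1 n_ge_2 by (intro power_mono) auto
  also have "\<dots> = (2 powr (1 / real n)) powr real n"
    using K by (simp add: powr_realpow)
  also have "\<dots> = 2"
    using n_ge_2 by (simp add: powr_powr)
  finally show ?thesis
    unfolding admissible_def using E0 by (simp add: omega_eq x_def y_def K_def)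
qed

end

section \<open>One step of the iteration\<close>

locale weierstrass_setting = absolute_value av + iteration_functions "degree f" p
  for av :: "'a::field \<Rightarrow> real" and f :: "'a poly" and p +
  fixes \<xi> :: "nat \<Rightarrow> 'a"
  assumes root_vector: "is_root_vector f \<xi>"
begin

abbreviation n :: nat where
  "n \<equiv> degree f"

abbreviation E :: "(nat \<Rightarrow> 'a) \<Rightarrow> real" where
  "E x \<equiv> Efun av n p \<xi> x"

definition pairwise_distinct :: "(nat \<Rightarrow> 'a) \<Rightarrow> bool" where
  "pairwise_distinct x \<longleftrightarrow> (\<forall>i<n. \<forall>j<n. i \<noteq> j \<longrightarrow> x i \<noteq> x j)"

definition rel_err :: "(nat \<Rightarrow> 'a) \<Rightarrow> nat \<Rightarrow> real" where
  "rel_err x j = av (x j - \<xi> j) / dist_i av n x j"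

lemma E_eq_pnorm: "E x = pnorm n p (rel_err x)"
  by (simp add: Efun_def rel_err_def[abs_def])

lemma E_nonneg: "0 \<le> E x"
  unfolding E_eq_pnorm using pnorm_nonneg n_ge_2 by simp

lemma lead_coeff_nonzero: "lead_coeff f \<noteq> 0"
  using n_ge_2 by auto

lemma other_indices_nonempty: "{..<n} - {i} \<noteq> {}"
proof -
  have "(if i = 0 then 1 else 0) \<in> {..<n} - {i}"
    using n_ge_2 by auto
  then show ?thesis
    by blast
qed

lemma dist_i_nonneg: "0 \<le> dist_i av n x i"
  using other_indices_nonempty[of i] by (simp add: dist_i_def Min_ge_iff)

lemma dist_i_pos: "pairwise_distinct x \<Longrightarrow> i < n \<Longrightarrow> 0 < dist_i av n x i"
  using other_indices_nonempty[of i] by (auto simp: dist_i_def Min_gr_iff pairwise_distinct_def)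

lemma dist_i_le: "i < n \<Longrightarrow> j < n \<Longrightarrow> j \<noteq> i \<Longrightarrow> dist_i av n x i \<le> av (x i - x j)"
  unfolding dist_i_def by (intro Min_le) auto

lemma rel_err_nonneg: "0 \<le> rel_err x j"
  by (simp add: rel_err_def dist_i_nonneg)

lemma rel_err_le_E: "j < n \<Longrightarrow> rel_err x j \<le> E x"
  using abs_le_pnorm[OF p_ge_1, of j n "rel_err x"] by (simp add: E_eq_pnorm rel_err_nonneg)

lemma err_le_rel_err_mult:
  assumes "pairwise_distinct x" "i < n" "j < n" "i \<noteq> j"
  shows "av (x j - \<xi> j) \<le> rel_err x j * av (x i - x j)"
proof -
  have "av (x j - \<xi> j) = rel_err x j * dist_i av n x j"
    using dist_i_pos[of x j] assms by (simp add: rel_err_def)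
  also have "\<dots> \<le> rel_err x j * av (x i - x j)"
    using dist_i_le[of j i x] assms rel_err_nonneg
    by (intro mult_left_mono) (auto simp: diff_commute)
  finally show ?thesis .
qed

lemma err_le_E_mult:
  assumes "pairwise_distinct x" "i < n" "j < n" "i \<noteq> j"
  shows "av (x j - \<xi> j) \<le> E x * av (x i - x j)"
  using err_le_rel_err_mult[OF assms] rel_err_le_E[OF assms(3)] by (meson mult_right_mono nonneg order_trans)

lemma poly_eq_remove_root:
  assumes "i < n"
  shows "poly f z = lead_coeff f * ((z - \<xi> i) * (\<Prod>j\<in>{..<n}-{i}. z - \<xi> j))"
  using root_vector assms by (simp add: is_root_vector_def prod.remove)

lemma err_WT_Suc_le:
  assumes c: "0 \<le> c"
    and H: "\<And>j. j < n \<Longrightarrow> j \<noteq> i \<Longrightarrow>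
              x i \<noteq> WT f m x j \<and> av (WT f m x j - \<xi> j) \<le> c * rel_err x j * av (x i - WT f m x j)"
    and i: "i < n"
  shows "av (WT f (Suc m) x i - \<xi> i) \<le> ((1 + c * E x / scale) ^ (n - 1) - 1) * av (x i - \<xi> i)"
proof -
  define y where "y = WT f m x"
  define S where "S = {..<n} - {i}"
  define b where "b j = (y j - \<xi> j) / (x i - y j)" for j
  have fS: "finite S"
    by (simp add: S_def)
  have nz: "x i - y j \<noteq> 0" if "j \<in> S" for j
    using H[of j] that by (auto simp: S_def y_def)
  have "poly f (x i) / (lead_coeff f * (\<Prod>j\<in>S. x i - y j))
      = (x i - \<xi> i) * (\<Prod>j\<in>S. (x i - \<xi> j) / (x i - y j))"
    using poly_eq_remove_root[OF i, of "x i"] lead_coeff_nonzero nz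
    by (simp add: S_def prod_dividef)
  also have "(\<Prod>j\<in>S. (x i - \<xi> j) / (x i - y j)) = (\<Prod>j\<in>S. 1 + b j)"
    using nz by (intro prod.cong) (auto simp: b_def field_simps)
  finally have eq: "WT f (Suc m) x i - \<xi> i = (x i - \<xi> i) * (1 - (\<Prod>j\<in>S. 1 + b j))"
    by (simp add: y_def S_def algebra_simps)
  have b: "av (b j) \<le> c * rel_err x j" if "j \<in> S" for j
    using H[of j] that nz[OF that] by (auto simp: S_def y_def b_def divide pos_divide_le_eq)
  have "av (WT f (Suc m) x i - \<xi> i) \<le> av (x i - \<xi> i) * ((\<Prod>j\<in>S. 1 + av (b j)) - 1)"
    unfolding eq mult using one_minus_prod_one_plus_le[OF fS, of b] by (intro mult_left_mono) auto
  also have "\<dots> \<le> av (x i - \<xi> i) * ((\<Prod>j\<in>S. 1 + c * rel_err x j) - 1)"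
    using b by (intro mult_left_mono diff_right_mono prod_mono) auto
  also have "\<dots> \<le> av (x i - \<xi> i) * ((1 + c * E x / scale) ^ (n - 1) - 1)"
    using prod_one_plus_le_pnorm[OF p_ge_1 n_ge_2 i c, of "rel_err x"] rel_err_nonneg
    unfolding S_def E_eq_pnorm scale_def by (intro mult_left_mono diff_right_mono) auto
  finally show ?thesis
    by (simp add: mult.commute)
qed

lemma displacement_le:
  assumes x: "pairwise_distinct x" and w: "1 \<le> w"
    and y: "\<And>k. k < n \<Longrightarrow> av (y k - \<xi> k) \<le> (w - 1) * av (x k - \<xi> k)"
    and ij: "i < n" "j < n" "i \<noteq> j" and k: "k \<in> {i, j}"
  shows "av (x k - y k) \<le> w * E x * av (x i - x j)"
proof -
  have k_n: "k < n"
    using k ij by auto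
  have "av (x k - y k) \<le> av (x k - \<xi> k) + av (y k - \<xi> k)"
    using triangle_diff[of "x k" "y k" "\<xi> k"] diff_commute[of "\<xi> k" "y k"] by simp
  also have "\<dots> \<le> w * av (x k - \<xi> k)"
    using y[OF k_n] by (simp add: algebra_simps)
  also have "\<dots> \<le> w * (E x * av (x i - x j))"
    using err_le_E_mult[OF x, of i j] err_le_E_mult[OF x, of j i] k ij w
    by (intro mult_left_mono) (auto simp: diff_commute)
  finally show ?thesis
    by (simp add: mult.assoc)
qed

lemma separation_le:
  assumes x: "pairwise_distinct x" and w: "1 \<le> w"
    and y: "\<And>k. k < n \<Longrightarrow> av (y k - \<xi> k) \<le> (w - 1) * av (x k - \<xi> k)"
    and ij: "i < n" "j < n" "i \<noteq> j"
  shows "(1 - 2 * E x * w) * av (x i - x j) \<le> av (x i - y j)"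
    and "(1 - 2 * E x * w) * av (x i - x j) \<le> av (y i - y j)"
proof -
  let ?D = "av (x i - x j)"
  have yi: "av (x i - y i) \<le> w * E x * ?D" and yj: "av (y j - x j) \<le> w * E x * ?D"
    using displacement_le[OF x w y ij, of i] displacement_le[OF x w y ij, of j]
    by (auto simp: diff_commute[of "y j"])
  have "0 \<le> w * E x * ?D"
    using w E_nonneg by simp
  moreover have "?D \<le> av (x i - y j) + av (y j - x j)"
    by (rule triangle_diff)
  ultimately show "(1 - 2 * E x * w) * ?D \<le> av (x i - y j)"
    using yj by (simp add: algebra_simps)
  have "?D \<le> av (x i - y i) + av (y i - y j) + av (y j - x j)"
    using triangle_diff[of "x i" "x j" "y i"] triangle_diff[of "y i" "x j" "y j"] by simp
  then show "(1 - 2 * E x * w) * ?D \<le> av (y i - y j)"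
    using yi yj by (simp add: algebra_simps)
qed

lemma err_WT_Suc_le_omegaN:
  assumes adm: "admissible (E x)"
    and H: "\<And>j. j < n \<Longrightarrow> j \<noteq> i \<Longrightarrow> x i \<noteq> WT f m x j
              \<and> av (WT f m x j - \<xi> j) \<le> phiN n p m (E x) * rel_err x j * av (x i - WT f m x j)"
    and i: "i < n"
  shows "av (WT f (Suc m) x i - \<xi> i) \<le> (omegaN n p m (E x) - 1) * av (x i - \<xi> i)"
proof -
  have "omegaN n p m (E x) = (1 + phiN n p m (E x) * E x / scale) ^ (n - 1)"
    by (simp add: omegaN_eq mult.commute)
  then show ?thesis
    using err_WT_Suc_le[OF phiN_nonneg[OF adm] H i] by simp
qed

lemma WT_approximation:
  assumes x: "pairwise_distinct x" and adm: "admissible (E x)"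
  shows "WD f m x \<and> (\<forall>i<n. \<forall>j<n. i \<noteq> j \<longrightarrow> x i \<noteq> WT f m x j
           \<and> av (WT f m x j - \<xi> j) \<le> phiN n p m (E x) * rel_err x j * av (x i - WT f m x j))"
proof (induction m)
  case 0
  then show ?case
    using x err_le_rel_err_mult[OF x] by (auto simp: pairwise_distinct_def)
next
  case (Suc m)
  define t where "t = E x"
  define w where "w = omegaN n p m t"
  define y where "y = WT f (Suc m) x"
  have w: "1 \<le> w" and psi: "0 < 1 - 2 * t * w"
    using omegaN_ge_1[OF adm] one_minus_omegaN_pos[OF adm] by (auto simp: w_def t_def)
  have y: "av (y k - \<xi> k) \<le> (w - 1) * av (x k - \<xi> k)" if "k < n" for k
    unfolding y_def w_def t_def using Suc that by (intro err_WT_Suc_le_omegaN[OF adm]) auto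
  have "x i \<noteq> y j \<and> av (y j - \<xi> j) \<le> phiN n p (Suc m) t * rel_err x j * av (x i - y j)"
    if ij: "i < n" "j < n" "i \<noteq> j" for i j
  proof -
    have sep: "(1 - 2 * t * w) * av (x i - x j) \<le> av (x i - y j)"
      using separation_le(1)[OF x w y ij] by (simp add: t_def)
    have "0 < (1 - 2 * t * w) * av (x i - x j)"
      using x ij psi by (simp add: pairwise_distinct_def)
    then have "x i \<noteq> y j"
      using sep by auto
    have "av (y j - \<xi> j) \<le> (w - 1) * av (x j - \<xi> j)"
      by (rule y[OF ij(2)])
    also have "\<dots> \<le> (w - 1) * (rel_err x j * av (x i - x j))"
      using err_le_rel_err_mult[OF x ij] w by (intro mult_left_mono) auto
    also have "\<dots> \<le> (w - 1) * (rel_err x j * (av (x i - y j) / (1 - 2 * t * w)))"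
      using sep psi w rel_err_nonneg
      by (intro mult_left_mono) (auto simp: pos_le_divide_eq mult.commute)
    also have "\<dots> = phiN n p (Suc m) t * rel_err x j * av (x i - y j)"
      by (simp add: phiN_Suc w_def)
    finally show ?thesis
      using \<open>x i \<noteq> y j\<close> by simp
  qed
  then show ?case
    using Suc by (simp add: y_def t_def)
qed

context
  fixes x :: "nat \<Rightarrow> 'a" and N :: nat
  assumes x: "pairwise_distinct x" and adm: "admissible (E x)" and N: "1 \<le> N"
begin

lemma WD_WT: "WD f N x"
  using WT_approximation[OF x adm] by blast

lemma err_WT_le:
  assumes i: "i < n"
  shows "av (WT f N x i - \<xi> i) \<le> (omegaN n p (N - 1) (E x) - 1) * av (x i - \<xi> i)"
proof -
  have "av (WT f (Suc (N - 1)) x i - \<xi> i) \<le> (omegaN n p (N - 1) (E x) - 1) * av (x i - \<xi> i)"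
    using WT_approximation[OF x adm, of "N - 1"] i by (intro err_WT_Suc_le_omegaN[OF adm]) auto
  moreover have "Suc (N - 1) = N"
    using N by simp
  ultimately show ?thesis
    by simp
qed

lemma separation_WT:
  "i < n \<Longrightarrow> j < n \<Longrightarrow> i \<noteq> j \<Longrightarrow>
    (1 - 2 * E x * omegaN n p (N - 1) (E x)) * av (x i - x j) \<le> av (WT f N x i - WT f N x j)"
  using err_WT_le omegaN_ge_1[OF adm] by (intro separation_le(2)[OF x]) auto

lemma pairwise_distinct_WT: "pairwise_distinct (WT f N x)"
  unfolding pairwise_distinct_def
proof (intro allI impI)
  fix i j
  assume ij: "i < n" "j < n" "i \<noteq> j"
  then have "0 < (1 - 2 * E x * omegaN n p (N - 1) (E x)) * av (x i - x j)"
    using x one_minus_omegaN_pos[OF adm] by (simp add: pairwise_distinct_def)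
  then show "WT f N x i \<noteq> WT f N x j"
    using separation_WT[OF ij] by auto
qed

lemma dist_i_WT_ge:
  assumes i: "i < n"
  shows "(1 - 2 * E x * omegaN n p (N - 1) (E x)) * dist_i av n x i \<le> dist_i av n (WT f N x) i"
  unfolding dist_i_def[of av n "WT f N x"]
proof (intro Min.boundedI)
  fix d
  assume "d \<in> (\<lambda>j. av (WT f N x i - WT f N x j)) ` ({..<n} - {i})"
  then obtain j where j: "j < n" "j \<noteq> i" and d: "d = av (WT f N x i - WT f N x j)"
    by auto
  have "(1 - 2 * E x * omegaN n p (N - 1) (E x)) * dist_i av n x i
      \<le> (1 - 2 * E x * omegaN n p (N - 1) (E x)) * av (x i - x j)"
    using dist_i_le[OF i j] one_minus_omegaN_pos[OF adm, of "N - 1"] by (intro mult_left_mono) auto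
  also have "\<dots> \<le> d"
    unfolding d using separation_WT[OF i j(1)] j by simp
  finally show "(1 - 2 * E x * omegaN n p (N - 1) (E x)) * dist_i av n x i \<le> d" .
qed (use other_indices_nonempty in auto)

lemma E_WT_le: "E (WT f N x) \<le> phiN n p N (E x) * E x"
proof -
  let ?w = "omegaN n p (N - 1) (E x)"
  have "rel_err (WT f N x) i \<le> phiN n p N (E x) * rel_err x i" if i: "i < n" for i
  proof -
    have "rel_err (WT f N x) i \<le> ((?w - 1) * av (x i - \<xi> i)) / ((1 - 2 * E x * ?w) * dist_i av n x i)"
      unfolding rel_err_def using err_WT_le[OF i] dist_i_WT_ge[OF i] dist_i_pos[OF x i]
        one_minus_omegaN_pos[OF adm] omegaN_ge_1[OF adm]
      by (intro frac_le) auto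
    also have "\<dots> = phiN n p N (E x) * rel_err x i"
      using phiN_Suc[of "N - 1" "E x"] N by (simp add: rel_err_def)
    finally show ?thesis .
  qed
  then have "pnorm n p (rel_err (WT f N x)) \<le> phiN n p N (E x) * pnorm n p (rel_err x)"
    using n_ge_2 phiN_nonneg[OF adm] rel_err_nonneg by (intro pnorm_le_mult[OF p_ge_1]) auto
  then show ?thesis
    by (simp add: E_eq_pnorm)
qed

end

end

section \<open>The iteration\<close>

locale weierstrass_iteration = weierstrass_setting +
  fixes N :: nat and x0 :: "nat \<Rightarrow> 'a"
  assumes N_ge_1: "1 \<le> N" and x0_distinct: "pairwise_distinct x0"
    and x0_admissible: "admissible (E x0)"
begin

abbreviation iter :: "nat \<Rightarrow> nat \<Rightarrow> 'a" where
  "iter k \<equiv> (WT f N ^^ k) x0"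

abbreviation E0 :: real where
  "E0 \<equiv> E x0"

abbreviation lam :: real where
  "lam \<equiv> phiN n p N E0"

abbreviation theta :: real where
  "theta \<equiv> psiN n p N E0"

abbreviation mu :: real where
  "mu \<equiv> phi n p E0"

abbreviation err :: "nat \<Rightarrow> real" where
  "err k \<equiv> pnorm n p (\<lambda>i. av (iter k i - \<xi> i))"

definition geom_exp :: "nat \<Rightarrow> nat" where
  "geom_exp k = ((N + 1) ^ k - 1) div N"

lemma geom_exp_mult: "(N + 1) ^ k = N * geom_exp k + 1"
  and geom_exp_Suc: "geom_exp (Suc k) = geom_exp k + (N + 1) ^ k"
  and geom_exp_ge: "k \<le> geom_exp k"
  using geometric_exponent[OF N_ge_1] unfolding geom_exp_def by blast+

lemma mult_geom_exp: "N * geom_exp k = (N + 1) ^ k - 1"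
  using geom_exp_mult[of k] by simp

lemma Suc_pred_N: "Suc (N - 1) = N"
  using N_ge_1 by simp

lemma mu_bounds: "0 \<le> mu" "mu < 1"
  using admissible_bounds[OF x0_admissible] by auto

lemma lam_bounds: "0 \<le> lam" "lam \<le> mu ^ N" "lam < 1"
proof -
  show "0 \<le> lam" and lam_mu: "lam \<le> mu ^ N"
    using phiN_nonneg[OF x0_admissible] phiN_le_phi_power[OF x0_admissible] by auto
  have "mu ^ N < 1"
    using mu_bounds N_ge_1 by (simp add: power_less_one_iff)
  then show "lam < 1"
    using lam_mu by simp
qed

lemma theta_eq: "theta = 1 - 2 * E0 * omegaN n p (N - 1) E0"
  by (simp add: psiN_def)

lemma theta_bounds: "0 < theta" "theta \<le> 1"
  using one_minus_omegaN_pos[OF x0_admissible, of "N - 1"] omegaN_ge_1[OF x0_admissible, of "N - 1"]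
    E_nonneg[of x0]
  by (auto simp: theta_eq)

lemma theta_mult_lam: "theta * lam = omegaN n p (N - 1) E0 - 1"
  using phiN_Suc[of "N - 1" E0, unfolded Suc_pred_N] one_minus_omegaN_pos[OF x0_admissible, of "N - 1"]
  by (simp add: theta_eq)

lemma lam_power_bounds: "0 \<le> lam ^ m" "lam ^ m \<le> 1"
  using lam_bounds by (auto simp: power_le_one)

lemma iter_invariant: "pairwise_distinct (iter k) \<and> E (iter k) \<le> lam ^ geom_exp k * E0"
proof (induction k)
  case 0
  then show ?case
    using x0_distinct by (simp add: geom_exp_def)
next
  case (Suc k)
  define t where "t = E (iter k)"
  define s where "s = lam ^ geom_exp k"
  have s: "0 \<le> s" "s \<le> 1"
    using lam_power_bounds by (auto simp: s_def)
  have t: "0 \<le> t" "t \<le> s * E0"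
    using Suc E_nonneg by (auto simp: t_def s_def)
  have "t \<le> E0"
    using t s E_nonneg[of x0] by (meson mult_left_le_one_le order_trans)
  then have adm: "admissible t"
    using admissible_mono[OF x0_admissible t(1)] by blast
  have "E (iter (Suc k)) \<le> phiN n p N t * t"
    using E_WT_le[of "iter k" N] Suc adm N_ge_1 by (simp add: t_def)
  also have "\<dots> \<le> (s ^ N * lam) * (s * E0)"
    using phiN_scaling[OF x0_admissible s t, of N] t phiN_nonneg[OF adm, of N] s lam_bounds(1)
    by (intro mult_mono) (auto simp: mult.commute)
  also have "\<dots> = lam ^ (geom_exp k * N + 1 + geom_exp k) * E0"
    by (simp add: s_def power_add power_mult[symmetric] mult.commute mult.left_commute)
  also have "geom_exp k * N + 1 + geom_exp k = geom_exp (Suc k)"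
    using geom_exp_mult[of k] geom_exp_Suc[of k] by (simp add: mult.commute)
  finally show ?case
    using pairwise_distinct_WT[of "iter k" N] Suc adm N_ge_1 by (simp add: t_def)
qed

lemma E_iter_le: "E (iter k) \<le> lam ^ k * E0"
proof -
  have "lam ^ geom_exp k \<le> lam ^ k"
    using geom_exp_ge[of k] lam_bounds by (intro power_decreasing) auto
  then show ?thesis
    using iter_invariant[of k] E_nonneg[of x0] by (meson mult_right_mono order_trans)
qed

lemma E_iter_le_E0: "E (iter k) \<le> E0"
  using E_iter_le[of k] lam_power_bounds E_nonneg[of x0] by (meson mult_left_le_one_le order_trans)

lemma admissible_iter: "admissible (E (iter k))"
  using admissible_mono[OF x0_admissible E_nonneg E_iter_le_E0] .

lemma pairwise_distinct_iter: "pairwise_distinct (iter k)"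
  using iter_invariant by blast

lemma WD_iter: "WD f N (iter k)"
  using WD_WT[OF pairwise_distinct_iter admissible_iter N_ge_1] .

lemma omegaN_iter_le: "omegaN n p (N - 1) (E (iter k)) - 1 \<le> theta * lam ^ ((N + 1) ^ k)"
proof -
  define s where "s = lam ^ geom_exp k"
  have s: "0 \<le> s" "s \<le> 1"
    using lam_power_bounds by (auto simp: s_def)
  have "omegaN n p (N - 1) (E (iter k)) - 1 \<le> s ^ N * (omegaN n p (N - 1) E0 - 1)"
    by (rule omegaN_scaling[OF x0_admissible s E_nonneg, of "iter k" "N - 1", unfolded Suc_pred_N])
      (use iter_invariant[of k] in \<open>simp add: s_def\<close>)
  also have "\<dots> = theta * (s ^ N * lam)"
    by (subst theta_mult_lam[symmetric]) (simp add: algebra_simps)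
  also have "s ^ N * lam = lam ^ ((N + 1) ^ k)"
    unfolding s_def geom_exp_mult[of k] by (simp add: power_mult[symmetric] mult.commute)
  finally show ?thesis .
qed

lemma err_iter_Suc_le_omegaN:
  "i < n \<Longrightarrow> av (iter (Suc k) i - \<xi> i) \<le> (omegaN n p (N - 1) (E (iter k)) - 1) * av (iter k i - \<xi> i)"
  using err_WT_le[OF pairwise_distinct_iter admissible_iter N_ge_1] by simp

lemma err_iter_Suc_le:
  assumes i: "i < n"
  shows "av (iter (Suc k) i - \<xi> i) \<le> theta * lam ^ ((N + 1) ^ k) * av (iter k i - \<xi> i)"
  using err_iter_Suc_le_omegaN[OF i, of k] omegaN_iter_le[of k]
  by (meson mult_right_mono nonneg order_trans)

lemma err_iter_le:
  assumes i: "i < n"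
  shows "av (iter k i - \<xi> i) \<le> theta ^ k * lam ^ geom_exp k * av (x0 i - \<xi> i)"
proof (induction k)
  case (Suc k)
  have "av (iter (Suc k) i - \<xi> i) \<le> theta * lam ^ ((N + 1) ^ k) * av (iter k i - \<xi> i)"
    by (rule err_iter_Suc_le[OF i])
  also have "\<dots> \<le> theta * lam ^ ((N + 1) ^ k) * (theta ^ k * lam ^ geom_exp k * av (x0 i - \<xi> i))"
    using Suc theta_bounds lam_bounds by (intro mult_left_mono) auto
  also have "\<dots> = theta ^ Suc k * lam ^ geom_exp (Suc k) * av (x0 i - \<xi> i)"
    by (simp add: geom_exp_Suc power_add algebra_simps)
  finally show ?case .
qed (simp add: geom_exp_def)

lemma err_iter_Suc_le_mu:
  assumes i: "i < n"
  shows "av (iter (Suc k) i - \<xi> i) \<le> mu ^ (N * (N + 1) ^ k) * av (iter k i - \<xi> i)"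
proof -
  have "theta * lam ^ ((N + 1) ^ k) \<le> 1 * (mu ^ N) ^ ((N + 1) ^ k)"
    using theta_bounds lam_bounds by (intro mult_mono power_mono) auto
  then show ?thesis
    using err_iter_Suc_le[OF i, of k] by (simp add: power_mult) (meson mult_right_mono nonneg order_trans)
qed

lemma err_iter_le_mu:
  assumes i: "i < n"
  shows "av (iter k i - \<xi> i) \<le> mu ^ ((N + 1) ^ k - 1) * av (x0 i - \<xi> i)"
proof -
  have "theta ^ k * lam ^ geom_exp k \<le> 1 * (mu ^ N) ^ geom_exp k"
    using theta_bounds lam_bounds by (intro mult_mono power_mono power_le_one) auto
  also have "\<dots> = mu ^ ((N + 1) ^ k - 1)"
    by (simp only: power_mult[symmetric] mult_geom_exp)
  finally show ?thesis
    using err_iter_le[OF i, of k] by (meson mult_right_mono nonneg order_trans)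
qed

lemma iter_converges:
  assumes i: "i < n"
  shows "(\<lambda>k. av (iter k i - \<xi> i)) \<longlonglongrightarrow> 0"
proof (rule Lim_null_comparison)
  have "av (iter k i - \<xi> i) \<le> mu ^ k * av (x0 i - \<xi> i)" for k
  proof -
    have "k \<le> (N + 1) ^ k - 1"
      using geom_exp_ge[of k] N_ge_1 mult_geom_exp[of k] by (metis le_trans mult_le_mono1 mult_1)
    then have "mu ^ ((N + 1) ^ k - 1) \<le> mu ^ k"
      using mu_bounds by (intro power_decreasing) auto
    then show ?thesis
      using err_iter_le_mu[OF i, of k] by (meson mult_right_mono nonneg order_trans)
  qed
  then show "\<forall>\<^sub>F k in sequentially. norm (av (iter k i - \<xi> i)) \<le> mu ^ k * av (x0 i - \<xi> i)"
    by simp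
  show "(\<lambda>k. mu ^ k * av (x0 i - \<xi> i)) \<longlonglongrightarrow> 0"
    using mu_bounds by (intro tendsto_mult_left_zero LIMSEQ_power_zero) auto
qed

lemma dist_i_iter_Suc_ge:
  assumes i: "i < n"
  shows "(1 - (1 - theta) * lam ^ k) * dist_i av n (iter k) i \<le> dist_i av n (iter (Suc k)) i"
proof -
  let ?t = "E (iter k)"
  have "?t * omegaN n p (N - 1) ?t \<le> (lam ^ k * E0) * omegaN n p (N - 1) E0"
    using E_iter_le[of k] omegaN_mono[OF x0_admissible E_nonneg[of "iter k"] E_iter_le_E0[of k], of "N - 1"]
      E_nonneg[of "iter k"] E_nonneg[of x0] lam_power_bounds[of k]
      omegaN_ge_1[OF admissible_iter[of k], of "N - 1"]
    by (intro mult_mono) auto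
  then have "1 - (1 - theta) * lam ^ k \<le> 1 - 2 * ?t * omegaN n p (N - 1) ?t"
    by (simp add: theta_eq algebra_simps)
  then have "(1 - (1 - theta) * lam ^ k) * dist_i av n (iter k) i
      \<le> (1 - 2 * ?t * omegaN n p (N - 1) ?t) * dist_i av n (iter k) i"
    using dist_i_nonneg by (intro mult_right_mono) auto
  also have "\<dots> \<le> dist_i av n (iter (Suc k)) i"
    using dist_i_WT_ge[OF pairwise_distinct_iter admissible_iter N_ge_1 i] by simp
  finally show ?thesis .
qed

lemma dist_i_iter_ge_prod:
  assumes i: "i < n"
  shows "(\<Prod>l<k. 1 - (1 - theta) * lam ^ l) * dist_i av n x0 i \<le> dist_i av n (iter k) i"
proof (induction k)
  case (Suc k)
  have "0 \<le> 1 - (1 - theta) * lam ^ k"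
    using theta_bounds lam_power_bounds[of k] by (smt (verit) mult_left_le_one_le)
  have "(\<Prod>l<Suc k. 1 - (1 - theta) * lam ^ l) * dist_i av n x0 i
      = (1 - (1 - theta) * lam ^ k) * ((\<Prod>l<k. 1 - (1 - theta) * lam ^ l) * dist_i av n x0 i)"
    by (simp add: algebra_simps)
  also have "\<dots> \<le> (1 - (1 - theta) * lam ^ k) * dist_i av n (iter k) i"
    using Suc \<open>0 \<le> 1 - (1 - theta) * lam ^ k\<close> by (rule mult_left_mono)
  also have "\<dots> \<le> dist_i av n (iter (Suc k)) i"
    by (rule dist_i_iter_Suc_ge[OF i])
  finally show ?case .
qed simp

lemma dist_i_iter_uniform_lower_bound: "\<exists>\<delta>>0. \<forall>k. \<forall>i<n. \<delta> \<le> dist_i av n (iter k) i"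
proof -
  define \<rho> where "\<rho> = exp (- ((1 - theta) / theta) / (1 - lam))"
  define d0 where "d0 = Min ((\<lambda>i. dist_i av n x0 i) ` {..<n})"
  have "0 < d0"
    unfolding d0_def using n_ge_2 dist_i_pos[OF x0_distinct]
    by (subst Min_gr_iff) (auto simp: lessThan_empty_iff)
  moreover have "\<rho> * d0 \<le> dist_i av n (iter k) i" if i: "i < n" for k i
  proof -
    have "\<rho> \<le> (\<Prod>l<k. 1 - (1 - theta) * lam ^ l)"
      using prod_one_minus_geometric_lower_bound[of "1 - theta" lam k] theta_bounds lam_bounds
      by (simp add: \<rho>_def)
    moreover have "d0 \<le> dist_i av n x0 i"
      unfolding d0_def using i by (intro Min_le) auto
    moreover have "0 < \<rho>"
      by (simp add: \<rho>_def)
    ultimately have "\<rho> * d0 \<le> (\<Prod>l<k. 1 - (1 - theta) * lam ^ l) * dist_i av n x0 i"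
      using \<open>0 < d0\<close> by (intro mult_mono) auto
    then show ?thesis
      using dist_i_iter_ge_prod[OF i, of k] by linarith
  qed
  ultimately show ?thesis
    by (intro exI[of _ "\<rho> * d0"]) (auto simp: \<rho>_def)
qed

lemma E_iter_le_err: "\<exists>\<delta>>0. \<forall>k. E (iter k) \<le> err k / \<delta>"
proof -
  obtain \<delta> where \<delta>: "0 < \<delta>" "\<And>k i. i < n \<Longrightarrow> \<delta> \<le> dist_i av n (iter k) i"
    using dist_i_iter_uniform_lower_bound by blast
  have "E (iter k) \<le> (1 / \<delta>) * err k" for k
  proof -
    have "\<bar>rel_err (iter k) i\<bar> \<le> (1 / \<delta>) * \<bar>av (iter k i - \<xi> i)\<bar>" if i: "i < n" for i
      using \<delta>(1) \<delta>(2)[OF i, of k] dist_i_pos[OF pairwise_distinct_iter i]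
      by (simp add: rel_err_def divide_left_mono)
    then show ?thesis
      unfolding E_eq_pnorm using n_ge_2 \<delta>(1) by (intro pnorm_le_mult[OF p_ge_1]) auto
  qed
  then show ?thesis
    using \<delta>(1) by auto
qed

lemma err_order: "\<exists>C. \<forall>k. err (Suc k) \<le> C * err k ^ (N + 1)"
proof -
  obtain \<delta> where \<delta>: "0 < \<delta>" "\<And>k. E (iter k) \<le> err k / \<delta>"
    using E_iter_le_err by blast
  define wE where "wE = omegaN n p (N - 1) E0"
  have "err (Suc k) \<le> ((wE - 1) / (\<delta> * E0) ^ N) * err k ^ (N + 1)" for k
  proof -
    let ?t = "E (iter k)"
    have err_nonneg: "0 \<le> err k"
      using pnorm_nonneg n_ge_2 by simp
    have "?t / E0 \<le> (err k / \<delta>) / E0"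
      using \<delta>(2)[of k] E_nonneg[of x0] by (rule divide_right_mono)
    then have "?t / E0 \<le> err k / (\<delta> * E0)"
      by simp
    then have pow: "(?t / E0) ^ N \<le> (err k / (\<delta> * E0)) ^ N"
      using E_nonneg E_nonneg[of x0] by (intro power_mono) auto
    have "err (Suc k) \<le> (omegaN n p (N - 1) ?t - 1) * err k"
      using err_iter_Suc_le_omegaN omegaN_ge_1[OF admissible_iter] n_ge_2
      by (intro pnorm_le_mult[OF p_ge_1]) auto
    also have "\<dots> \<le> ((?t / E0) ^ N * (wE - 1)) * err k"
      using omegaN_sub_one_le_power[OF x0_admissible E_nonneg[of "iter k"] E_iter_le_E0[of k], of "N - 1",
          unfolded Suc_pred_N] err_nonneg
      by (intro mult_right_mono) (simp_all add: wE_def)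
    also have "\<dots> \<le> ((err k / (\<delta> * E0)) ^ N * (wE - 1)) * err k"
      using pow omegaN_ge_1[OF x0_admissible] err_nonneg
      by (intro mult_right_mono) (auto simp: wE_def)
    also have "\<dots> = ((wE - 1) / (\<delta> * E0) ^ N) * err k ^ (N + 1)"
      by (simp add: power_divide field_simps)
    finally show ?thesis .
  qed
  then show ?thesis
    by blast
qed

end

theorem corollary2p13:
  fixes av :: "'a::field \<Rightarrow> real" and f :: "'a poly" and \<xi> x0 :: "nat \<Rightarrow> 'a"
    and N :: nat and p :: ereal
  assumes absval: "is_absval av"
    and closed: "alg_closed_field TYPE('a)"
    and deg: "degree f \<ge> 2"
    and root: "is_root_vector f \<xi>"
    and N: "N \<ge> 1"
    and p: "1 \<le> p"
    and distinct: "\<forall>i<degree f. \<forall>j<degree f. i \<noteq> j \<longrightarrow> x0 i \<noteq> x0 j"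
    and init: "Efun av (degree f) p \<xi> x0 \<le>
       real (degree f) * (2 powr (1 / real (degree f)) - 1) /
         ((real (degree f) - 1) powr (1 - invp p) + 2)"
  shows "let n = degree f; x = (\<lambda>k. (WT f N ^^ k) x0); E = Efun av n p \<xi> x0;
             lam = phiN n p N E; \<theta> = psiN n p N E; \<mu> = phi n p E;
             err = (\<lambda>k. pnorm n p (\<lambda>i. av (x k i - \<xi> i))) in
     (\<forall>k. WD f N (x k))
   \<and> (\<forall>i<n. ((\<lambda>k. av (x k i - \<xi> i)) \<longlonglongrightarrow> 0))
   \<and> (\<exists>C. \<forall>k. err (Suc k) \<le> C * err k ^ (N + 1))
   \<and> (\<forall>k. \<forall>i<n. av (x (Suc k) i - \<xi> i) \<le> \<theta> * lam ^ ((N + 1) ^ k) * av (x k i - \<xi> i))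
   \<and> (\<forall>k. \<forall>i<n. av (x k i - \<xi> i) \<le> \<theta> ^ k * lam ^ (((N + 1) ^ k - 1) div N) * av (x0 i - \<xi> i))
   \<and> (\<forall>k. \<forall>i<n. av (x (Suc k) i - \<xi> i) \<le> \<mu> ^ (N * (N + 1) ^ k) * av (x k i - \<xi> i))
   \<and> (\<forall>k. \<forall>i<n. av (x k i - \<xi> i) \<le> \<mu> ^ ((N + 1) ^ k - 1) * av (x0 i - \<xi> i))"
proof -
  interpret S: weierstrass_setting av f p \<xi>
    by unfold_locales (use absval deg p root in auto)
  interpret weierstrass_iteration av f p \<xi> N x0
  proof unfold_locales
    show "S.pairwise_distinct x0"
      using distinct by (simp add: S.pairwise_distinct_def)
    show "S.admissible (S.E x0)"
      using S.admissible_initial[OF S.E_nonneg init] .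
  qed (rule N)
  show ?thesis
    unfolding Let_def
    by (intro conjI allI impI WD_iter iter_converges err_order err_iter_Suc_le
        err_iter_le[unfolded geom_exp_def] err_iter_Suc_le_mu err_iter_le_mu) assumption+
qed

end
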